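(* Let $N=\{1,\ldots,n\}$ and $\mathcal{X}=\{-1,1\}^n$. If $n$ is odd, a deterministic voting rule $\phi:\mathcal{X}\to\{-1,1\}$ is robust and anonymous if and only if it is a simple majority rule. If $n$ is even, no deterministic voting rule is both robust and anonymous.
   Context: A deterministic voting rule $\phi$ is anonymous if $\phi(x)=\phi((x_{\pi(i)})_{i\in N})$ for all $x$ and all permutations $\pi$ of $N$. Responsiveness: $r_i(\phi,p)=p(\{x:\phi(x)=x_i\})$ for $p\in\Delta(\mathcal{X})$ (probability distributions on $\mathcal{X}$). $\phi$ is robust if for every $p\in\Delta(\mathcal{X})$ there is some $i\in N$ with $r_i(\phi,p)>1/2$. A simple majority rule is a rule with $\phi(x)=1$ whenever $\sum_i x_i>0$ and $\phi(x)=-1$ whenever $\sum_ix_i<0$ (for odd $n$ this determines $\phi$ uniquely). *)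

theory Defs
  imports "HOL-Probability.Probability"
begin

definition profiles :: "nat \<Rightarrow> (nat \<Rightarrow> int) set" where
  "profiles n = {1..n} \<rightarrow>\<^sub>E {-1, 1}"

definition voting_rule :: "nat \<Rightarrow> ((nat \<Rightarrow> int) \<Rightarrow> int) \<Rightarrow> bool" where
  "voting_rule n \<phi> \<longleftrightarrow> (\<forall>x\<in>profiles n. \<phi> x \<in> {-1, 1})"

definition anonymous :: "nat \<Rightarrow> ((nat \<Rightarrow> int) \<Rightarrow> int) \<Rightarrow> bool" where
  "anonymous n \<phi> \<longleftrightarrow>
     (\<forall>x\<in>profiles n. \<forall>\<pi>. \<pi> permutes {1..n} \<longrightarrow> \<phi> x = \<phi> (\<lambda>i. x (\<pi> i)))"

definition responsiveness ::
    "nat \<Rightarrow> ((nat \<Rightarrow> int) \<Rightarrow> int) \<Rightarrow> (nat \<Rightarrow> int) pmf \<Rightarrow> nat \<Rightarrow> real" where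
  "responsiveness n \<phi> p i = measure_pmf.prob p {x \<in> profiles n. \<phi> x = x i}"

definition robust :: "nat \<Rightarrow> ((nat \<Rightarrow> int) \<Rightarrow> int) \<Rightarrow> bool" where
  "robust n \<phi> \<longleftrightarrow>
     (\<forall>p :: (nat \<Rightarrow> int) pmf. set_pmf p \<subseteq> profiles n \<longrightarrow>
        (\<exists>i\<in>{1..n}. responsiveness n \<phi> p i > 1/2))"

definition simple_majority :: "nat \<Rightarrow> ((nat \<Rightarrow> int) \<Rightarrow> int) \<Rightarrow> bool" where
  "simple_majority n \<phi> \<longleftrightarrow>
     (\<forall>x\<in>profiles n. ((\<Sum>i\<in>{1..n}. x i) > 0 \<longrightarrow> \<phi> x = 1) \<and>
                     ((\<Sum>i\<in>{1..n}. x i) < 0 \<longrightarrow> \<phi> x = -1))"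

end

theory Submission
  imports Defs
begin

text \<open>
  An anonymous rule's value at x depends only on how many voters vote \<open>\<phi> x\<close>. If some profile
  in which at most n/2 voters vote v yields v, then so do the profiles in which voters
  \<open>1..m\<close>, resp. \<open>m+1..2m\<close>, vote v; under a fair coin between them each voter agrees
  with the outcome with probability at most 1/2, so the rule is not robust. Hence a robust
  anonymous rule always follows a strict majority: impossible at a tie when n is even, and
  exactly simple majority when n is odd. Conversely, for odd n simple majority is anonymous
  and at every profile at least (n+1)/2 voters agree with it, so the responsivenesses sum to
  at least (n+1)/2 and one of them exceeds 1/2.
\<close>

definition vote_count :: "nat \<Rightarrow> (nat \<Rightarrow> int) \<Rightarrow> int \<Rightarrow> nat" where
  "vote_count n x v = card {i \<in> {1..n}. x i = v}"

lemma finite_profiles: "finite (profiles n)"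
  unfolding profiles_def by (intro finite_PiE) auto

lemma profile_value: "x \<in> profiles n \<Longrightarrow> i \<in> {1..n} \<Longrightarrow> x i \<in> {-1, 1}"
  unfolding profiles_def by auto

lemma profile_undefined: "x \<in> profiles n \<Longrightarrow> i \<notin> {1..n} \<Longrightarrow> x i = undefined"
  unfolding profiles_def by auto

lemma voters_split_by_vote:
  "x \<in> profiles n \<Longrightarrow> {1..n} = {i \<in> {1..n}. x i = 1} \<union> {i \<in> {1..n}. x i = -1}"
  using profile_value by blast

lemma vote_count_add:
  assumes "x \<in> profiles n"
  shows "vote_count n x 1 + vote_count n x (-1) = n"
proof -
  have "card {1..n} = vote_count n x 1 + vote_count n x (-1)"
    unfolding vote_count_def by (subst voters_split_by_vote[OF assms], rule card_Un_disjoint) auto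
  then show ?thesis
    by simp
qed

lemma sum_profile_eq_vote_margin:
  assumes "x \<in> profiles n"
  shows "(\<Sum>i\<in>{1..n}. x i) = int (vote_count n x 1) - int (vote_count n x (-1))"
proof -
  have "(\<Sum>i\<in>{1..n}. x i) = (\<Sum>i\<in>{i \<in> {1..n}. x i = 1}. x i) + (\<Sum>i\<in>{i \<in> {1..n}. x i = -1}. x i)"
    by (subst voters_split_by_vote[OF assms], rule sum.union_disjoint) auto
  then show ?thesis
    by (simp add: vote_count_def)
qed

lemma exists_permutes_image_eq:
  assumes "finite S" "A \<subseteq> S" "B \<subseteq> S" "card A = card B"
  shows "\<exists>\<pi>. \<pi> permutes S \<and> \<pi> ` A = B"
proof -
  have fin: "finite A" "finite B" "finite (S - A)" "finite (S - B)"
    using assms by (auto intro: finite_subset)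
  obtain f where f: "bij_betw f A B"
    using finite_same_card_bij fin assms(4) by blast
  have "card (S - A) = card (S - B)"
    using assms by (simp add: card_Diff_subset fin)
  then obtain g where g: "bij_betw g (S - A) (S - B)"
    using finite_same_card_bij fin by blast
  define \<pi> where "\<pi> i = (if i \<in> A then f i else if i \<in> S then g i else i)" for i
  have \<pi>A: "bij_betw \<pi> A B"
    using f by (rule bij_betw_cong[THEN iffD1, rotated]) (simp add: \<pi>_def)
  moreover have "bij_betw \<pi> (S - A) (S - B)"
    using g by (rule bij_betw_cong[THEN iffD1, rotated]) (simp add: \<pi>_def)
  ultimately have "bij_betw \<pi> (A \<union> (S - A)) (B \<union> (S - B))"
    by (rule bij_betw_combine) blast
  then have "bij_betw \<pi> S S"
    using assms by (simp add: Un_absorb1)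
  then have "\<pi> permutes S"
    by (rule bij_imp_permutes) (use assms in \<open>auto simp: \<pi>_def\<close>)
  with \<pi>A show ?thesis
    by (auto simp: bij_betw_def)
qed

lemma profiles_permute_if_vote_count_eq:
  assumes x: "x \<in> profiles n" and y: "y \<in> profiles n" and v: "v \<in> {-1, 1}"
    and count: "vote_count n x v = vote_count n y v"
  shows "\<exists>\<pi>. \<pi> permutes {1..n} \<and> y = (\<lambda>i. x (\<pi> i))"
proof -
  obtain \<pi> where \<pi>: "\<pi> permutes {1..n}"
    and image: "\<pi> ` {i \<in> {1..n}. y i = v} = {i \<in> {1..n}. x i = v}"
    using exists_permutes_image_eq[OF finite_atLeastAtMost _ _ count[unfolded vote_count_def, symmetric]]
    by blast
  have "y i = x (\<pi> i)" for i
  proof (cases "i \<in> {1..n}")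
    case True
    then have "\<pi> i \<in> {1..n}"
      by (simp only: permutes_in_image[OF \<pi>])
    then have "x (\<pi> i) = v \<longleftrightarrow> \<pi> i \<in> \<pi> ` {i \<in> {1..n}. y i = v}"
      unfolding image by simp
    also have "\<dots> \<longleftrightarrow> y i = v"
      using True by (simp add: inj_image_mem_iff[OF permutes_inj[OF \<pi>]])
    finally show ?thesis
      using profile_value[OF x \<open>\<pi> i \<in> {1..n}\<close>] profile_value[OF y True] v by auto
  next
    case False
    then show ?thesis
      using \<pi> profile_undefined[OF x] profile_undefined[OF y] by (simp add: permutes_not_in)
  qed
  with \<pi> show ?thesis
    by blast
qed

lemma anonymous_eq_if_vote_count_eq:
  assumes "anonymous n \<phi>" "x \<in> profiles n" "y \<in> profiles n" "v \<in> {-1, 1}"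
    and "vote_count n x v = vote_count n y v"
  shows "\<phi> x = \<phi> y"
  using profiles_permute_if_vote_count_eq[OF assms(2-)] assms(1,2)
  unfolding anonymous_def by blast

definition block_profile :: "nat \<Rightarrow> int \<Rightarrow> nat \<Rightarrow> nat \<Rightarrow> nat \<Rightarrow> int" where
  "block_profile n v a b i = (if i \<in> {1..n} then if a < i \<and> i \<le> b then v else -v else undefined)"

lemma block_profile_in_profiles: "v \<in> {-1, 1} \<Longrightarrow> block_profile n v a b \<in> profiles n"
  unfolding profiles_def block_profile_def by (auto split: if_splits)

lemma block_profile_eq_iff:
  "v \<in> {-1, 1} \<Longrightarrow> i \<in> {1..n} \<Longrightarrow> block_profile n v a b i = v \<longleftrightarrow> a < i \<and> i \<le> b"
  unfolding block_profile_def by (auto split: if_splits)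

lemma vote_count_block_profile:
  assumes "v \<in> {-1, 1}" "b \<le> n"
  shows "vote_count n (block_profile n v a b) v = b - a"
proof -
  have "{i \<in> {1..n}. block_profile n v a b i = v} = {a<..b}"
    using assms by (auto simp: block_profile_eq_iff)
  then show ?thesis
    by (simp add: vote_count_def)
qed

lemma measure_coin_le_half:
  assumes "\<not> (y \<in> E \<and> z \<in> E)"
  shows "measure_pmf.prob (map_pmf (\<lambda>b. if b then y else z) (bernoulli_pmf (1/2))) E \<le> 1/2"
proof -
  let ?coin = "bernoulli_pmf (1/2)"
  let ?side = "y \<in> E"
  have "(\<lambda>b. if b then y else z) -` E \<subseteq> {?side}"
    using assms by (auto split: if_splits)
  then have "measure_pmf.prob ?coin ((\<lambda>b. if b then y else z) -` E) \<le> measure_pmf.prob ?coin {?side}"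
    by (rule measure_pmf.finite_measure_mono) simp
  also have "\<dots> = 1/2"
    by (cases "y \<in> E") (simp_all add: measure_pmf_single)
  finally show ?thesis
    by simp
qed

lemma not_robust_if_wins_without_majority:
  assumes v: "v \<in> {-1, 1}" and half: "2 * m \<le> n"
    and wins: "\<And>w. w \<in> profiles n \<Longrightarrow> vote_count n w v = m \<Longrightarrow> \<phi> w = v"
  shows "\<not> robust n \<phi>"
proof
  assume "robust n \<phi>"
  let ?y = "block_profile n v 0 m" and ?z = "block_profile n v m (2 * m)"
  have profiles: "?y \<in> profiles n" "?z \<in> profiles n"
    using v by (simp_all add: block_profile_in_profiles)
  then have "\<phi> ?y = v" "\<phi> ?z = v"
    using wins v half by (simp_all add: vote_count_block_profile)
  define p where "p = map_pmf (\<lambda>b. if b then ?y else ?z) (bernoulli_pmf (1/2))"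
  have "set_pmf p \<subseteq> profiles n"
    using profiles by (auto simp: p_def)
  then obtain i where i: "i \<in> {1..n}" and "responsiveness n \<phi> p i > 1/2"
    using \<open>robust n \<phi>\<close> unfolding robust_def by blast
  moreover have "\<not> (?y i = v \<and> ?z i = v)"
    using i v by (simp add: block_profile_eq_iff)
  then have "\<not> (\<phi> ?y = ?y i \<and> \<phi> ?z = ?z i)"
    using \<open>\<phi> ?y = v\<close> \<open>\<phi> ?z = v\<close> by metis
  then have "responsiveness n \<phi> p i \<le> 1/2"
    unfolding responsiveness_def p_def by (intro measure_coin_le_half) blast
  ultimately show False
    by simp
qed

lemma robust_anonymous_winner_has_majority:
  assumes "robust n \<phi>" "anonymous n \<phi>" "x \<in> profiles n" "\<phi> x \<in> {-1, 1}"
  shows "n < 2 * vote_count n x (\<phi> x)"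
proof (rule ccontr)
  assume "\<not> ?thesis"
  then have "2 * vote_count n x (\<phi> x) \<le> n"
    by simp
  moreover have "\<phi> w = \<phi> x" if "w \<in> profiles n" "vote_count n w (\<phi> x) = vote_count n x (\<phi> x)" for w
    using anonymous_eq_if_vote_count_eq[OF assms(2) that(1) assms(3,4) that(2)] .
  ultimately have "\<not> robust n \<phi>"
    by (rule not_robust_if_wins_without_majority[OF assms(4)])
  with assms(1) show False
    by contradiction
qed

lemma robust_anonymous_imp_simple_majority:
  assumes "voting_rule n \<phi>" "robust n \<phi>" "anonymous n \<phi>"
  shows "simple_majority n \<phi>"
  unfolding simple_majority_def
proof (intro ballI)
  fix x assume x: "x \<in> profiles n"
  have outcome: "\<phi> x \<in> {-1, 1}"
    using assms(1) x unfolding voting_rule_def by blast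
  moreover have "n < 2 * vote_count n x (\<phi> x)"
    using robust_anonymous_winner_has_majority[OF assms(2,3) x outcome] .
  ultimately show "((\<Sum>i\<in>{1..n}. x i) > 0 \<longrightarrow> \<phi> x = 1) \<and> ((\<Sum>i\<in>{1..n}. x i) < 0 \<longrightarrow> \<phi> x = -1)"
    using vote_count_add[OF x] sum_profile_eq_vote_margin[OF x] by auto
qed

lemma even_not_robust_anonymous:
  assumes "voting_rule n \<phi>" "even n"
  shows "\<not> (robust n \<phi> \<and> anonymous n \<phi>)"
proof
  assume "robust n \<phi> \<and> anonymous n \<phi>"
  let ?tie = "block_profile n 1 0 (n div 2)"
  have tie: "?tie \<in> profiles n"
    by (simp add: block_profile_in_profiles)
  have "vote_count n ?tie 1 = n div 2"
    by (simp add: vote_count_block_profile)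
  moreover have "vote_count n ?tie (-1) = n div 2"
    using vote_count_add[OF tie] calculation \<open>even n\<close> by auto
  moreover have outcome: "\<phi> ?tie \<in> {-1, 1}"
    using assms(1) tie unfolding voting_rule_def by blast
  moreover have "n < 2 * vote_count n ?tie (\<phi> ?tie)"
    using robust_anonymous_winner_has_majority \<open>robust n \<phi> \<and> anonymous n \<phi>\<close> tie outcome
    by blast
  ultimately show False
    by auto
qed

lemma odd_imp_profile_sum_nonzero:
  assumes "odd n" "x \<in> profiles n"
  shows "(\<Sum>i\<in>{1..n}. x i) \<noteq> 0"
  using assms vote_count_add[OF assms(2)] sum_profile_eq_vote_margin[OF assms(2)] by presburger

lemma simple_majority_anonymous:
  assumes "odd n" "simple_majority n \<phi>"
  shows "anonymous n \<phi>"
  unfolding anonymous_def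
proof (intro ballI allI impI)
  fix x and \<pi> :: "nat \<Rightarrow> nat"
  assume x: "x \<in> profiles n" and \<pi>: "\<pi> permutes {1..n}"
  have x\<pi>: "(\<lambda>i. x (\<pi> i)) \<in> profiles n"
    using x permutes_in_image[OF \<pi>] permutes_not_in[OF \<pi>] unfolding profiles_def by auto
  have "(\<Sum>i\<in>{1..n}. x (\<pi> i)) = (\<Sum>i\<in>{1..n}. x i)"
    using sum.permute[OF \<pi>, of x] by (simp add: comp_def)
  with odd_imp_profile_sum_nonzero[OF assms(1) x] assms(2) x x\<pi>
  show "\<phi> x = \<phi> (\<lambda>i. x (\<pi> i))"
    unfolding simple_majority_def by (metis linorder_neqE_linordered_idom)
qed

lemma simple_majority_winner_has_majority:
  assumes "odd n" "simple_majority n \<phi>" and x: "x \<in> profiles n"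
  shows "n < 2 * vote_count n x (\<phi> x)"
proof -
  note counts = vote_count_add[OF x] sum_profile_eq_vote_margin[OF x]
  consider "(\<Sum>i\<in>{1..n}. x i) > 0" | "(\<Sum>i\<in>{1..n}. x i) < 0"
    using odd_imp_profile_sum_nonzero[OF assms(1) x] by linarith
  then show ?thesis
  proof cases
    case 1
    then have "\<phi> x = 1"
      using assms(2) x unfolding simple_majority_def by blast
    with 1 counts show ?thesis
      by simp
  next
    case 2
    then have "\<phi> x = -1"
      using assms(2) x unfolding simple_majority_def by blast
    with 2 counts show ?thesis
      by simp
  qed
qed

lemma sum_responsiveness:
  assumes "set_pmf p \<subseteq> profiles n"
  shows "(\<Sum>i\<in>{1..n}. responsiveness n \<phi> p i) = (\<Sum>x\<in>profiles n. pmf p x * vote_count n x (\<phi> x))"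
proof -
  have responsiveness: "responsiveness n \<phi> p i = (\<Sum>x\<in>profiles n. pmf p x * of_bool (x i = \<phi> x))" for i
  proof -
    have "responsiveness n \<phi> p i = (\<Sum>x\<in>{x \<in> profiles n. x i = \<phi> x}. pmf p x)"
      unfolding responsiveness_def
      by (simp add: measure_measure_pmf_finite finite_profiles eq_commute)
    also have "\<dots> = (\<Sum>x\<in>profiles n. if x i = \<phi> x then pmf p x else 0)"
      by (rule sum.inter_filter[OF finite_profiles])
    also have "\<dots> = (\<Sum>x\<in>profiles n. pmf p x * of_bool (x i = \<phi> x))"
      by (intro sum.cong) auto
    finally show ?thesis .
  qed
  have "(\<Sum>i\<in>{1..n}. responsiveness n \<phi> p i)
      = (\<Sum>x\<in>profiles n. \<Sum>i\<in>{1..n}. pmf p x * of_bool (x i = \<phi> x))"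
    unfolding responsiveness by (rule sum.swap)
  also have "\<dots> = (\<Sum>x\<in>profiles n. pmf p x * vote_count n x (\<phi> x))"
    by (simp add: sum_distrib_left[symmetric] vote_count_def Int_def del: sum_mult_of_bool_eq)
  finally show ?thesis .
qed

lemma robust_if_winner_has_majority:
  assumes majority: "\<And>x. x \<in> profiles n \<Longrightarrow> n < 2 * vote_count n x (\<phi> x)"
  shows "robust n \<phi>"
  unfolding robust_def
proof (intro allI impI)
  fix p :: "(nat \<Rightarrow> int) pmf"
  assume p: "set_pmf p \<subseteq> profiles n"
  have "(real n + 1) / 2 \<le> vote_count n x (\<phi> x)" if "x \<in> profiles n" for x
  proof -
    have "n + 1 \<le> 2 * vote_count n x (\<phi> x)"
      using majority[OF that] by simp
    then have "real (n + 1) \<le> real (2 * vote_count n x (\<phi> x))"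
      by (rule of_nat_mono)
    then show ?thesis
      by simp
  qed
  then have "(\<Sum>x\<in>profiles n. pmf p x * ((real n + 1) / 2))
      \<le> (\<Sum>x\<in>profiles n. pmf p x * vote_count n x (\<phi> x))"
    by (intro sum_mono mult_left_mono) auto
  then have "(real n + 1) / 2 \<le> (\<Sum>i\<in>{1..n}. responsiveness n \<phi> p i)"
    by (simp only: sum_responsiveness[OF p] sum_distrib_right[symmetric]
        sum_pmf_eq_1[OF finite_profiles p] mult_1)
  then show "\<exists>i\<in>{1..n}. responsiveness n \<phi> p i > 1/2"
  proof (rule contrapos_pp)
    assume "\<not> (\<exists>i\<in>{1..n}. responsiveness n \<phi> p i > 1/2)"
    then have "(\<Sum>i\<in>{1..n}. responsiveness n \<phi> p i) \<le> (\<Sum>i\<in>{1..n}. 1/2)"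
      by (intro sum_mono) (simp add: not_less)
    then show "\<not> (real n + 1) / 2 \<le> (\<Sum>i\<in>{1..n}. responsiveness n \<phi> p i)"
      by simp
  qed
qed

theorem corollary2:
  fixes n :: nat and \<phi> :: "(nat \<Rightarrow> int) \<Rightarrow> int"
  assumes "voting_rule n \<phi>"
  shows "(odd n \<longrightarrow> (robust n \<phi> \<and> anonymous n \<phi> \<longleftrightarrow> simple_majority n \<phi>)) \<and>
         (even n \<longrightarrow> \<not> (robust n \<phi> \<and> anonymous n \<phi>))"
proof (intro conjI impI)
  assume "odd n"
  show "robust n \<phi> \<and> anonymous n \<phi> \<longleftrightarrow> simple_majority n \<phi>"
  proof
    show "simple_majority n \<phi>" if "robust n \<phi> \<and> anonymous n \<phi>"
      using robust_anonymous_imp_simple_majority assms that by blast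
    show "robust n \<phi> \<and> anonymous n \<phi>" if "simple_majority n \<phi>"
      using robust_if_winner_has_majority simple_majority_winner_has_majority
        simple_majority_anonymous \<open>odd n\<close> that by blast
  qed
next
  show "even n \<Longrightarrow> \<not> (robust n \<phi> \<and> anonymous n \<phi>)"
    using even_not_robust_anonymous assms by blast
qed

end
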